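(* Let $n\geq1$ be an integer, $p>1$ real, $q=pe^{2\pi i/n}$, and $X_{n,p}=\{\sum_{k=0}^{n-1}x_kq^k\mid x_k\in\{0,1\}\}$. For $h=1,\dots,n$ define $$\underline K(h)=\{k\in\{0,\dots,n-1\}\mid (k-h+1)\bmod n\leq \lfloor n/2\rfloor-1\},\qquad \overline K(h)=\{k\in\{0,\dots,n-1\}\mid (k-h+1)\bmod n\leq \lceil n/2\rceil-1\},$$ with $(k-h+1)\bmod n\in\{0,\dots,n-1\}$, and set $\mathbf v_{2h-1}=\sum_{k\in\underline K(h)}q^k$, $\mathbf v_{2h}=\sum_{k\in\overline K(h)}q^k$. Indices of the $\mathbf v_j$ are taken modulo $2n$ (so $\mathbf v_0=\mathbf v_{2n}$), and for $j=1,\dots,2n$ let $\mathbf n_j=-i(\mathbf v_j-\mathbf v_{j-1})$. Then for every $x\in X_{n,p}$ and every $h=1,\dots,n$, $$(x-\mathbf v_{2h-1})\cdot\mathbf n_{2h-1}\leq0\qquad\text{and}\qquad (x-\mathbf v_{2h})\cdot\mathbf n_{2h}\leq 0 .$$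
   Context: For $\mathbf u,\mathbf w\in\mathbb C$, the scalar product is $\mathbf u\cdot\mathbf w=\mathrm{Re}(\mathbf u\,\overline{\mathbf w})=|\mathbf u||\mathbf w|\cos(\arg\mathbf u-\arg\mathbf w)$, i.e. the Euclidean inner product under $\mathbb C\cong\mathbb R^2$. *)

theory Defs
  imports "HOL-Analysis.Analysis"
begin

definition qpar :: "nat \<Rightarrow> real \<Rightarrow> complex" where
  "qpar n p = complex_of_real p * exp (2 * complex_of_real pi * \<i> / of_nat n)"

definition Xset :: "nat \<Rightarrow> real \<Rightarrow> complex set" where
  "Xset n p = {(\<Sum>k<n. of_nat (c k) * qpar n p ^ k) | c :: nat \<Rightarrow> nat. \<forall>k<n. c k \<in> {0, 1}}"

definition Klow :: "nat \<Rightarrow> int \<Rightarrow> nat set" where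
  "Klow n h = {k. k < n \<and> (int k - h + 1) mod int n \<le> \<lfloor>real n / 2\<rfloor> - 1}"

definition Khigh :: "nat \<Rightarrow> int \<Rightarrow> nat set" where
  "Khigh n h = {k. k < n \<and> (int k - h + 1) mod int n \<le> \<lceil>real n / 2\<rceil> - 1}"

definition vvec :: "nat \<Rightarrow> real \<Rightarrow> int \<Rightarrow> complex" where
  "vvec n p j = (let m = (if j mod (2 * int n) = 0 then 2 * int n else j mod (2 * int n)) in
     if odd m then (\<Sum>k\<in>Klow n ((m + 1) div 2). qpar n p ^ k)
     else (\<Sum>k\<in>Khigh n (m div 2). qpar n p ^ k))"

definition nvec :: "nat \<Rightarrow> real \<Rightarrow> int \<Rightarrow> complex" where
  "nvec n p j = - \<i> * (vvec n p j - vvec n p (j - 1))"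

end

theory Submission
  imports Defs
begin

text \<open>
  Every vertex v_j is the sum of q^k over an arc of floor(n/2) or ceiling(n/2) cyclically
  consecutive indices k, and consecutive arcs differ by one or two indices. The powers of q
  by which consecutive vertices differ all point, after absorbing a sign, in one direction
  e^(i pi d/n), so n_j is a nonnegative multiple of -i e^(i pi d/n). Against this normal q^k
  contributes -p^k sin (pi (2k - d)/n), which is nonnegative exactly on the arc and nonpositive
  off it. Hence among all sums of distinct powers q^k (k < n) the functional (- \<bullet> n_j) is
  maximised by the sum over the arc, that is, by v_j.
\<close>

definition index_arc :: "nat \<Rightarrow> int \<Rightarrow> int \<Rightarrow> nat set" where
  "index_arc n a l = {k. k < n \<and> (int k - a) mod int n < l}"

lemma Klow_eq_index_arc: "Klow n h = index_arc n (h - 1) \<lfloor>real n / 2\<rfloor>"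
  unfolding Klow_def index_arc_def by (rule Collect_cong) (auto simp: algebra_simps)

lemma Khigh_eq_index_arc: "Khigh n h = index_arc n (h - 1) \<lceil>real n / 2\<rceil>"
  unfolding Khigh_def index_arc_def by (rule Collect_cong) (auto simp: algebra_simps)

lemma index_arc_cong: "a mod int n = b mod int n \<Longrightarrow> index_arc n a l = index_arc n b l"
  unfolding index_arc_def by (metis mod_diff_right_eq)

lemma finite_index_arc [simp]: "finite (index_arc n a l)"
  unfolding index_arc_def by simp

lemma index_arc_residue_unique:
  assumes "k < n" "j < n" "(int k - a) mod int n = (int j - a) mod int n"
  shows "k = j"
proof -
  have "int k mod int n = int j mod int n"
    using assms(3) by (metis diff_add_cancel mod_add_left_eq)
  then show ?thesis using assms(1,2) by simp
qed

lemma sum_index_arc_extend: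
  assumes "0 \<le> l" "l < int n"
  shows "(\<Sum>k\<in>index_arc n a (l + 1). f k) = f (nat ((a + l) mod int n)) + (\<Sum>k\<in>index_arc n a l. f k)"
proof -
  define j where "j = nat ((a + l) mod int n)"
  have "n > 0" using assms by simp
  then have j: "j < n" "(int j - a) mod int n = l"
    using assms by (simp_all add: j_def mod_diff_left_eq nat_less_iff)
  have "index_arc n a (l + 1) = insert j (index_arc n a l)"
    using j index_arc_residue_unique[of _ n j a] unfolding index_arc_def by force
  moreover have "j \<notin> index_arc n a l" using j unfolding index_arc_def by simp
  ultimately show ?thesis unfolding j_def by simp
qed

lemma sum_index_arc_extend_back:
  assumes "0 \<le> l" "l < int n"
  shows "(\<Sum>k\<in>index_arc n (a - 1) (l + 1). f k) = f (nat ((a - 1) mod int n)) + (\<Sum>k\<in>index_arc n a l. f k)"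
proof -
  define j where "j = nat ((a - 1) mod int n)"
  have "n > 0" using assms by simp
  then have j: "j < n" "(int j - a) mod int n = int n - 1"
    by (simp_all add: j_def mod_diff_left_eq zmod_minus1 nat_less_iff)
  have shift: "(int k - (a - 1)) mod int n = ((int k - a) mod int n + 1) mod int n" for k
    by (simp add: mod_simps algebra_simps)
  have "index_arc n (a - 1) (l + 1) = insert j (index_arc n a l)"
  proof (rule set_eqI)
    fix k
    consider "(int k - a) mod int n = int n - 1" | "(int k - a) mod int n + 1 < int n"
      using pos_mod_bound[of "int n" "int k - a"] \<open>n > 0\<close> by linarith
    then show "k \<in> index_arc n (a - 1) (l + 1) \<longleftrightarrow> k \<in> insert j (index_arc n a l)"
    proof cases
      case 1
      then show ?thesis using j assms index_arc_residue_unique[of k n j a]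
        unfolding index_arc_def shift by auto
    next
      case 2
      then show ?thesis using j assms unfolding index_arc_def shift by auto
    qed
  qed
  moreover have "j \<notin> index_arc n a l" using j assms unfolding index_arc_def by simp
  ultimately show ?thesis unfolding j_def by simp
qed

lemma qpar_power: "n > 0 \<Longrightarrow> qpar n p ^ k = of_real (p ^ k) * cis (pi * of_int (2 * int k) / n)"
proof -
  assume "n > 0"
  have "qpar n p = of_real p * cis (2 * pi / n)"
    unfolding qpar_def cis_conv_exp by (simp add: field_simps)
  then have "qpar n p ^ k = of_real p ^ k * cis (2 * pi / n) ^ k"
    by (simp add: power_mult_distrib)
  also have "\<dots> = of_real (p ^ k) * cis (real k * (2 * pi / n))"
    by (simp only: Complex.DeMoivre of_real_power)
  also have "real k * (2 * pi / n) = pi * of_int (2 * int k) / n"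
    by simp
  finally show ?thesis .
qed

lemma cis_pi_frac_mod:
  assumes "n > 0"
  shows "cis (pi * of_int (d mod (2 * int n)) / n) = cis (pi * of_int d / n)"
proof -
  have "d = d mod (2 * int n) + int n * (2 * (d div (2 * int n)))"
    using div_mult_mod_eq[of d "2 * int n"] by (simp add: algebra_simps)
  then have "real_of_int d = of_int (d mod (2 * int n)) + real n * (2 * of_int (d div (2 * int n)))"
    by (metis of_int_add of_int_mult of_int_of_nat_eq of_int_numeral)
  then have "pi * of_int d / n = pi * of_int (d mod (2 * int n)) / n + 2 * pi * of_int (d div (2 * int n))"
    using assms by (simp add: field_simps)
  then show ?thesis by (simp add: cis_mult[symmetric])
qed

lemma inner_cis_rotated:
  "(of_real a * cis s) \<bullet> (- \<i> * (of_real c * cis t)) = - (a * c * sin (s - t))"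
  unfolding inner_complex_def by (simp add: sin_diff algebra_simps)

text \<open>
  The bounds on \<open>d\<close> put the angles \<open>2\<pi>k/n\<close> of the arc into \<open>[\<pi>d/n - \<pi>, \<pi>d/n]\<close> and those
  of the remaining indices into \<open>[\<pi>d/n, \<pi>d/n + \<pi>]\<close>.
\<close>
lemma sin_index_arc_sign:
  assumes "n > 0" "k < n"
    and "2 * (a + l) - 2 \<le> d" "2 * a + int n - 2 \<le> d" "d \<le> 2 * (a + l)" "d \<le> 2 * a + int n"
  shows "k \<in> index_arc n a l \<Longrightarrow> sin (pi * of_int (2 * int k - d) / n) \<le> 0"
    and "k \<notin> index_arc n a l \<Longrightarrow> sin (pi * of_int (2 * int k - d) / n) \<ge> 0"
proof -
  define r where "r = (int k - a) mod int n"
  define y where "y = 2 * r + 2 * a - d"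
  have r: "0 \<le> r" "r < int n" "k \<in> index_arc n a l \<longleftrightarrow> r < l"
    using assms(1,2) by (simp_all add: r_def index_arc_def)
  have "int k - a = int n * ((int k - a) div int n) + r"
    by (simp add: r_def)
  then have "2 * int k - d = y + 2 * int n * ((int k - a) div int n)"
    unfolding y_def by linarith
  then have "pi * of_int (2 * int k - d) / n = pi * of_int y / n + of_int ((int k - a) div int n) * (2 * pi)"
    using assms(1) by (simp add: field_simps)
  then have reduce: "sin (pi * of_int (2 * int k - d) / n) = sin (pi * of_int y / n)"
    by (simp only: sin.plus_of_int[where 'a = real, simplified])
  show "sin (pi * of_int (2 * int k - d) / n) \<le> 0" if "k \<in> index_arc n a l"
  proof -
    have "0 \<le> pi * of_int (- y) / n" "pi * of_int (- y) / n \<le> pi"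
      using r that assms(1,3,6) by (simp_all add: y_def divide_le_eq)
    then show ?thesis unfolding reduce using sin_ge_zero[of "pi * of_int (- y) / n"] by simp
  qed
  show "sin (pi * of_int (2 * int k - d) / n) \<ge> 0" if "k \<notin> index_arc n a l"
  proof -
    have "0 \<le> pi * of_int y / n" "pi * of_int y / n \<le> pi"
      using r that assms(1,4,5) by (simp_all add: y_def divide_le_eq)
    then show ?thesis unfolding reduce by (rule sin_ge_zero)
  qed
qed

lemma Xset_inner_index_arc_nonpos:
  assumes "n > 0" "p \<ge> 0" "x \<in> Xset n p" "c \<ge> 0"
    and "2 * (a + l) - 2 \<le> d" "2 * a + int n - 2 \<le> d" "d \<le> 2 * (a + l)" "d \<le> 2 * a + int n"
  shows "(x - (\<Sum>k\<in>index_arc n a l. qpar n p ^ k)) \<bullet> (- \<i> * (of_real c * cis (pi * of_int d / n))) \<le> 0"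
proof -
  obtain b where b: "\<forall>k<n. b k \<in> {0, 1::nat}" and x: "x = (\<Sum>k<n. of_nat (b k) * qpar n p ^ k)"
    using assms(3) unfolding Xset_def by blast
  define K where "K = index_arc n a l"
  define \<theta> where "\<theta> k = pi * of_int (2 * int k - d) / n" for k :: nat
  have "(\<Sum>k\<in>K. qpar n p ^ k) = (\<Sum>k\<in>{..<n} \<inter> K. qpar n p ^ k)"
    by (rule sum.cong) (auto simp: K_def index_arc_def)
  also have "\<dots> = (\<Sum>k<n. of_real (of_bool (k \<in> K)) * qpar n p ^ k)"
    unfolding sum.inter_restrict[OF finite_lessThan] by (rule sum.cong) auto
  finally have "x - (\<Sum>k\<in>K. qpar n p ^ k)
      = (\<Sum>k<n. of_real (p ^ k * (real (b k) - of_bool (k \<in> K))) * cis (pi * of_int (2 * int k) / n))"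
    unfolding x by (simp add: qpar_power[OF assms(1)] sum_subtractf[symmetric] algebra_simps)
  then have "(x - (\<Sum>k\<in>K. qpar n p ^ k)) \<bullet> (- \<i> * (of_real c * cis (pi * of_int d / n)))
      = (\<Sum>k<n. - (p ^ k * (real (b k) - of_bool (k \<in> K)) * c
                     * sin (pi * of_int (2 * int k) / n - pi * of_int d / n)))"
    by (simp only: inner_sum_left inner_cis_rotated)
  also have "\<dots> = (\<Sum>k<n. - (p ^ k * c * ((real (b k) - of_bool (k \<in> K)) * sin (\<theta> k))))"
    by (simp add: \<theta>_def diff_divide_distrib algebra_simps)
  also have "\<dots> \<le> 0"
  proof (rule sum_nonpos)
    fix k assume "k \<in> {..<n}"
    then have k: "k < n" by simp
    have "0 \<le> (real (b k) - of_bool (k \<in> K)) * sin (\<theta> k)"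
    proof (cases "k \<in> K")
      case True
      then show ?thesis using b k sin_index_arc_sign(1)[OF assms(1) k assms(5-8)]
        by (auto simp: K_def \<theta>_def mult_nonpos_nonpos)
    next
      case False
      then show ?thesis using sin_index_arc_sign(2)[OF assms(1) k assms(5-8)]
        by (simp add: K_def \<theta>_def)
    qed
    then show "- (p ^ k * c * ((real (b k) - of_bool (k \<in> K)) * sin (\<theta> k))) \<le> 0"
      using assms(2,4) by simp
  qed
  finally show ?thesis unfolding K_def .
qed

lemma qpar_power_residue:
  assumes "n > 0" "(2 * a) mod (2 * int n) = d mod (2 * int n)"
  shows "qpar n p ^ nat (a mod int n) = of_real (p ^ nat (a mod int n)) * cis (pi * of_int d / n)"
proof -
  define k where "k = nat (a mod int n)"
  have "(2 * int k) mod (2 * int n) = d mod (2 * int n)"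
    using assms by (simp add: k_def mod_mult_mult1)
  then have "cis (pi * of_int (2 * int k) / n) = cis (pi * of_int d / n)"
    by (metis cis_pi_frac_mod[OF assms(1)])
  then show ?thesis unfolding k_def by (simp add: qpar_power[OF assms(1)])
qed

lemma minus_qpar_power_residue:
  assumes "n > 0" "(2 * a + int n) mod (2 * int n) = d mod (2 * int n)"
  shows "- (qpar n p ^ nat (a mod int n)) = of_real (p ^ nat (a mod int n)) * cis (pi * of_int d / n)"
proof -
  define k where "k = nat (a mod int n)"
  have "(2 * int k) mod (2 * int n) = (2 * a) mod (2 * int n)"
    using assms(1) by (simp add: k_def mod_mult_mult1)
  then have "(2 * int k + int n) mod (2 * int n) = d mod (2 * int n)"
    using assms(2) by (metis mod_add_left_eq)
  have "- (qpar n p ^ k) = of_real (p ^ k) * - cis (pi * of_int (2 * int k) / n)"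
    by (simp add: qpar_power[OF assms(1)])
  also have "- cis (pi * of_int (2 * int k) / n) = cis (pi * of_int (2 * int k) / n + pi)"
    by (rule minus_cis)
  also have "\<dots> = cis (pi * of_int (2 * int k + int n) / n)"
    using assms(1) by (simp add: field_simps)
  also have "\<dots> = cis (pi * of_int d / n)"
    using \<open>(2 * int k + int n) mod (2 * int n) = d mod (2 * int n)\<close> by (metis cis_pi_frac_mod[OF assms(1)])
  finally show ?thesis unfolding k_def .
qed

lemma floor_ceiling_half_cases:
  obtains m where "n = 2 * m" "\<lfloor>real n / 2\<rfloor> = int m" "\<lceil>real n / 2\<rceil> = int m"
  | m where "n = 2 * m + 1" "\<lfloor>real n / 2\<rfloor> = int m" "\<lceil>real n / 2\<rceil> = int m + 1"
proof (cases "even n")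
  case True
  then obtain m where "n = 2 * m" by blast
  then show ?thesis using that(1) by simp
next
  case False
  then obtain m where m: "n = 2 * m + 1" using oddE by blast
  then have "real n / 2 = real m + 1 / 2" by simp
  then have "\<lfloor>real n / 2\<rfloor> = int m" "\<lceil>real n / 2\<rceil> = int m + 1" by linarith+
  then show ?thesis using that(2) m by blast
qed

lemma sum_index_arc_ceiling_step:
  assumes "n > 0" "p \<ge> 0"
  obtains c where "c \<ge> 0"
    "(\<Sum>k\<in>index_arc n a \<lceil>real n / 2\<rceil>. qpar n p ^ k) - (\<Sum>k\<in>index_arc n a \<lfloor>real n / 2\<rfloor>. qpar n p ^ k)
       = of_real c * cis (pi * of_int (2 * a + int n - 1) / n)"
proof (cases rule: floor_ceiling_half_cases[of n])
  case (1 m)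
  then show ?thesis using that[of 0] by simp
next
  case (2 m)
  define j where "j = (a + int m) mod int n"
  have "(\<Sum>k\<in>index_arc n a \<lceil>real n / 2\<rceil>. qpar n p ^ k) - (\<Sum>k\<in>index_arc n a \<lfloor>real n / 2\<rfloor>. qpar n p ^ k)
      = qpar n p ^ nat j"
    using sum_index_arc_extend[of "int m" n "\<lambda>k. qpar n p ^ k" a] 2 by (simp add: j_def)
  also have "\<dots> = of_real (p ^ nat j) * cis (pi * of_int (2 * a + int n - 1) / n)"
    unfolding j_def by (rule qpar_power_residue[OF assms(1)]) (simp add: 2 algebra_simps)
  finally show ?thesis using that[of "p ^ nat j"] assms(2) by simp
qed

lemma sum_index_arc_back_step:
  assumes "n > 0" "p \<ge> 0"
  obtains c where "c \<ge> 0"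
    "(\<Sum>k\<in>index_arc n a \<lfloor>real n / 2\<rfloor>. qpar n p ^ k) - (\<Sum>k\<in>index_arc n (a - 1) \<lceil>real n / 2\<rceil>. qpar n p ^ k)
       = of_real c * cis (pi * of_int (2 * a + int n - 2) / n)"
proof -
  define dir where "dir = cis (pi * of_int (2 * a + int n - 2) / n)"
  define i where "i = (a - 1) mod int n"
  have minus_power_i: "- (qpar n p ^ nat i) = of_real (p ^ nat i) * dir"
    unfolding i_def dir_def by (rule minus_qpar_power_residue[OF assms(1)]) (simp add: algebra_simps)
  show ?thesis
  proof (cases rule: floor_ceiling_half_cases[of n])
    case (1 m)
    \<comment> \<open>For even \<open>n\<close> the indices \<open>j\<close> and \<open>i\<close> are antipodal, so \<open>q^j\<close> and \<open>-q^i\<close> point the same way.\<close>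
    define j where "j = (a + (int m - 1)) mod int n"
    have power_j: "qpar n p ^ nat j = of_real (p ^ nat j) * dir"
      unfolding j_def dir_def by (rule qpar_power_residue[OF assms(1)]) (simp add: 1 algebra_simps)
    have "m > 0" using 1 assms(1) by simp
    then have "(\<Sum>k\<in>index_arc n a \<lfloor>real n / 2\<rfloor>. qpar n p ^ k) - (\<Sum>k\<in>index_arc n (a - 1) \<lceil>real n / 2\<rceil>. qpar n p ^ k)
        = qpar n p ^ nat j + - (qpar n p ^ nat i)"
      using sum_index_arc_extend[of "int m - 1" n "\<lambda>k. qpar n p ^ k" a]
        sum_index_arc_extend_back[of "int m - 1" n "\<lambda>k. qpar n p ^ k" a] 1
      by (simp add: i_def j_def)
    also have "\<dots> = of_real (p ^ nat j + p ^ nat i) * dir"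
      unfolding power_j minus_power_i by (simp only: of_real_add distrib_right)
    finally show ?thesis using that[of "p ^ nat j + p ^ nat i"] assms(2) unfolding dir_def by simp
  next
    case (2 m)
    have "(\<Sum>k\<in>index_arc n a \<lfloor>real n / 2\<rfloor>. qpar n p ^ k) - (\<Sum>k\<in>index_arc n (a - 1) \<lceil>real n / 2\<rceil>. qpar n p ^ k)
        = - (qpar n p ^ nat i)"
      using sum_index_arc_extend_back[of "int m" n "\<lambda>k. qpar n p ^ k" a] 2 by (simp add: i_def)
    then show ?thesis using that[of "p ^ nat i"] minus_power_i assms(2) unfolding dir_def by simp
  qed
qed

lemma Xset_inner_ceiling_facet:
  assumes "n > 0" "p \<ge> 0" "x \<in> Xset n p"
  shows "(x - (\<Sum>k\<in>index_arc n a \<lceil>real n / 2\<rceil>. qpar n p ^ k))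
      \<bullet> (- \<i> * ((\<Sum>k\<in>index_arc n a \<lceil>real n / 2\<rceil>. qpar n p ^ k) - (\<Sum>k\<in>index_arc n a \<lfloor>real n / 2\<rfloor>. qpar n p ^ k))) \<le> 0"
proof -
  obtain c where "c \<ge> 0" and step:
    "(\<Sum>k\<in>index_arc n a \<lceil>real n / 2\<rceil>. qpar n p ^ k) - (\<Sum>k\<in>index_arc n a \<lfloor>real n / 2\<rfloor>. qpar n p ^ k)
       = of_real c * cis (pi * of_int (2 * a + int n - 1) / n)"
    using sum_index_arc_ceiling_step[OF assms(1,2)] .
  have "int n \<le> 2 * \<lceil>real n / 2\<rceil>" "2 * \<lceil>real n / 2\<rceil> \<le> int n + 1"
    by (cases rule: floor_ceiling_half_cases[of n]; simp)+
  then show ?thesis unfolding step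
    by (intro Xset_inner_index_arc_nonpos[OF assms \<open>c \<ge> 0\<close>]) auto
qed

lemma Xset_inner_floor_facet:
  assumes "n > 0" "p \<ge> 0" "x \<in> Xset n p"
  shows "(x - (\<Sum>k\<in>index_arc n a \<lfloor>real n / 2\<rfloor>. qpar n p ^ k))
      \<bullet> (- \<i> * ((\<Sum>k\<in>index_arc n a \<lfloor>real n / 2\<rfloor>. qpar n p ^ k) - (\<Sum>k\<in>index_arc n (a - 1) \<lceil>real n / 2\<rceil>. qpar n p ^ k))) \<le> 0"
proof -
  obtain c where "c \<ge> 0" and step:
    "(\<Sum>k\<in>index_arc n a \<lfloor>real n / 2\<rfloor>. qpar n p ^ k) - (\<Sum>k\<in>index_arc n (a - 1) \<lceil>real n / 2\<rceil>. qpar n p ^ k)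
       = of_real c * cis (pi * of_int (2 * a + int n - 2) / n)"
    using sum_index_arc_back_step[OF assms(1,2)] .
  have "2 * \<lfloor>real n / 2\<rfloor> \<le> int n" "int n \<le> 2 * \<lfloor>real n / 2\<rfloor> + 1"
    by (cases rule: floor_ceiling_half_cases[of n]; simp)+
  then show ?thesis unfolding step
    by (intro Xset_inner_index_arc_nonpos[OF assms \<open>c \<ge> 0\<close>]) auto
qed

lemma vvec_odd_eq:
  assumes "1 \<le> h" "h \<le> int n"
  shows "vvec n p (2 * h - 1) = (\<Sum>k\<in>index_arc n (h - 1) \<lfloor>real n / 2\<rfloor>. qpar n p ^ k)"
proof -
  have "(2 * h - 1) mod (2 * int n) = 2 * h - 1"
    using assms by (intro mod_pos_pos_trivial) auto
  then show ?thesis using assms by (simp add: vvec_def Klow_eq_index_arc)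
qed

lemma vvec_even_eq:
  assumes "0 \<le> h" "h \<le> int n"
  shows "vvec n p (2 * h) = (\<Sum>k\<in>index_arc n (h - 1) \<lceil>real n / 2\<rceil>. qpar n p ^ k)"
proof (cases "h = 0 \<or> h = int n")
  case True
  have "index_arc n (int n - 1) l = index_arc n (- 1) l" for l
    by (rule index_arc_cong) (simp add: mod_diff_left_eq[symmetric])
  then show ?thesis using True by (auto simp: vvec_def Khigh_eq_index_arc)
next
  case False
  then have "(2 * h) mod (2 * int n) = 2 * h"
    using assms by (intro mod_pos_pos_trivial) auto
  then show ?thesis using assms False by (simp add: vvec_def Khigh_eq_index_arc)
qed

theorem lemma3p13:
  fixes n :: nat and p :: real and x :: complex and h :: int
  assumes "n \<ge> 1" and "p > 1"
    and "x \<in> Xset n p"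
    and "1 \<le> h" and "h \<le> int n"
  shows "(x - vvec n p (2 * h - 1)) \<bullet> nvec n p (2 * h - 1) \<le> 0
       \<and> (x - vvec n p (2 * h)) \<bullet> nvec n p (2 * h) \<le> 0"
proof -
  have n: "n > 0" and p: "p \<ge> 0" using assms(1,2) by simp_all
  have "vvec n p (2 * h - 1 - 1) = (\<Sum>k\<in>index_arc n (h - 1 - 1) \<lceil>real n / 2\<rceil>. qpar n p ^ k)"
    using vvec_even_eq[of "h - 1" n p] assms(4,5) by (simp add: algebra_simps)
  then show ?thesis
    using Xset_inner_floor_facet[OF n p assms(3), of "h - 1"]
      Xset_inner_ceiling_facet[OF n p assms(3), of "h - 1"] vvec_odd_eq[OF assms(4,5)] vvec_even_eq[of h n p] assms(4,5)
    by (simp add: nvec_def)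
qed

end
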